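(* For every instance such that $|S_2|=2$ and $\pi_1+\pi_3+\pi_4-1=1$, we have $H^{PW''}\le \tfrac{360}{193}H^*$.
   Context: An instance consists of an integer $n\ge 1$ and growth rates $1=h(1)\ge h(2)\ge\cdots\ge h(n)>0$ of bamboos $b_1,\dots,b_n$. Bamboo Garden Trimming (discrete version): - All heights are $0$ initially. - On each day $t=1,2,\dots$ every bamboo $b_j$ grows by $h(j)$. - At the end of each day the gardener cuts exactly one bamboo $\sigma(t)\in\{1,\dots,n\}$ back to height $0$. The height of a schedule $\sigma:\mathbb{N}\to\{1,\dots,n\}$ is the supremum, over all days $t$ and all $j$, of the height of $b_j$ at the end of day $t$ just before the cut. $H^*$ denotes the infimum of this height over all schedules. Value of algorithm PW'': - Split $\{1,\dots,n\}$ into four sets: - $S_1=\{j: \tfrac23<h(j)\le 1\}$; - $S_2=\{j:\tfrac12<h(j)\le\tfrac23\}$; - $S_3=\{j: h(j)\le\tfrac12 \text{ and } \tfrac23 2^{-k}<h(j)\le 2^{-k}\text{ for some integer }k\ge1\}$; - $S_4=\{j: h(j)\le\tfrac12\text{ and } 2^{-(k+1)}<h(j)\le \tfrac23 2^{-k}\text{ for some integer }k\ge 1\}$. - Modified growths: $h''(j)=2^{-k}$ for $j\in S_3$ and $h''(j)=\tfrac23 2^{-k}$ for $j\in S_4$, with $k$ as in the definition of the set. - Let $\pi_1=|S_1|$, $sh_3=\sum_{j\in S_3}h''(j)$, $sh_4=\sum_{j\in S_4}h''(j)$, $\pi_3=\lfloor sh_3\rfloor$, $\pi_4=\lfloor sh_4\rfloor$,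 $f_3=sh_3-\pi_3$, $f_4=sh_4-\pi_4$. - Option (a): $\pi_R(a)=\lceil f_3+f_4\rceil$ and $z(a)=\pi_1+|S_2|+\pi_3+\pi_4+\pi_R(a)$. - Option (b): if $S_2=\emptyset$ put $z(b)=+\infty$. Otherwise let $h^*=\max_{j\in S_2}h(j)$ and $f_2=\tfrac12$ if $|S_2|$ is odd, $f_2=0$ if $|S_2|$ is even. Then $\pi_R(b)=\lceil f_2+f_3+f_4\rceil$ and $z(b)=2h^*\,(\pi_1+\lfloor |S_2|/2\rfloor+\pi_3+\pi_4+\pi_R(b))$. - The value returned by algorithm PW'' is $H^{PW''}=\min\{z(a),z(b)\}$. The paper takes this as the maximum height of the periodic pinwheel trimming schedule that it builds from these partitions. *)

theory Defs
  imports "HOL-Library.Extended_Real" Complex_Main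
begin

text \<open>An instance: n and growth rates h 1, ..., h n (values of h outside {1..n} are irrelevant).\<close>

definition valid_instance :: "nat \<Rightarrow> (nat \<Rightarrow> real) \<Rightarrow> bool" where
  "valid_instance n h \<longleftrightarrow> n \<ge> 1 \<and> h 1 = 1 \<and> (\<forall>j\<in>{1..<n}. h (Suc j) \<le> h j) \<and> h n > 0"

text \<open>Schedules: sigma t is the bamboo cut at the end of day t (t = 1, 2, ...).\<close>

definition valid_schedule :: "nat \<Rightarrow> (nat \<Rightarrow> nat) \<Rightarrow> bool" where
  "valid_schedule n \<sigma> \<longleftrightarrow> (\<forall>t\<ge>1. \<sigma> t \<in> {1..n})"

definition last_cut :: "(nat \<Rightarrow> nat) \<Rightarrow> nat \<Rightarrow> nat \<Rightarrow> nat" where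
  "last_cut \<sigma> j t = Max ({0} \<union> {s. 1 \<le> s \<and> s < t \<and> \<sigma> s = j})"

text \<open>Height of bamboo j at the end of day t, just before the cut.\<close>
definition bamboo_height :: "(nat \<Rightarrow> real) \<Rightarrow> (nat \<Rightarrow> nat) \<Rightarrow> nat \<Rightarrow> nat \<Rightarrow> real" where
  "bamboo_height h \<sigma> j t = h j * real (t - last_cut \<sigma> j t)"

definition schedule_height :: "nat \<Rightarrow> (nat \<Rightarrow> real) \<Rightarrow> (nat \<Rightarrow> nat) \<Rightarrow> ereal" where
  "schedule_height n h \<sigma> = (SUP t\<in>{1..}. SUP j\<in>{1..n}. ereal (bamboo_height h \<sigma> j t))"

definition H_star :: "nat \<Rightarrow> (nat \<Rightarrow> real) \<Rightarrow> ereal" where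
  "H_star n h = (INF \<sigma>\<in>{\<sigma>. valid_schedule n \<sigma>}. schedule_height n h \<sigma>)"

definition S1 :: "nat \<Rightarrow> (nat \<Rightarrow> real) \<Rightarrow> nat set" where
  "S1 n h = {j\<in>{1..n}. 2/3 < h j \<and> h j \<le> 1}"

definition S2 :: "nat \<Rightarrow> (nat \<Rightarrow> real) \<Rightarrow> nat set" where
  "S2 n h = {j\<in>{1..n}. 1/2 < h j \<and> h j \<le> 2/3}"

definition S3 :: "nat \<Rightarrow> (nat \<Rightarrow> real) \<Rightarrow> nat set" where
  "S3 n h = {j\<in>{1..n}. h j \<le> 1/2 \<and> (\<exists>k::nat. k \<ge> 1 \<and> 2/3 * (1/2)^k < h j \<and> h j \<le> (1/2)^k)}"

definition S4 :: "nat \<Rightarrow> (nat \<Rightarrow> real) \<Rightarrow> nat set" where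
  "S4 n h = {j\<in>{1..n}. h j \<le> 1/2 \<and> (\<exists>k::nat. k \<ge> 1 \<and> (1/2)^(k+1) < h j \<and> h j \<le> 2/3 * (1/2)^k)}"

definition h3'' :: "(nat \<Rightarrow> real) \<Rightarrow> nat \<Rightarrow> real" where
  "h3'' h j = (THE x. \<exists>k::nat. k \<ge> 1 \<and> 2/3 * (1/2)^k < h j \<and> h j \<le> (1/2)^k \<and> x = (1/2)^k)"

definition h4'' :: "(nat \<Rightarrow> real) \<Rightarrow> nat \<Rightarrow> real" where
  "h4'' h j = (THE x. \<exists>k::nat. k \<ge> 1 \<and> (1/2)^(k+1) < h j \<and> h j \<le> 2/3 * (1/2)^k \<and> x = 2/3 * (1/2)^k)"

definition pi1 :: "nat \<Rightarrow> (nat \<Rightarrow> real) \<Rightarrow> nat" where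
  "pi1 n h = card (S1 n h)"

definition sh3 :: "nat \<Rightarrow> (nat \<Rightarrow> real) \<Rightarrow> real" where
  "sh3 n h = (\<Sum>j\<in>S3 n h. h3'' h j)"

definition sh4 :: "nat \<Rightarrow> (nat \<Rightarrow> real) \<Rightarrow> real" where
  "sh4 n h = (\<Sum>j\<in>S4 n h. h4'' h j)"

definition pi3 :: "nat \<Rightarrow> (nat \<Rightarrow> real) \<Rightarrow> int" where
  "pi3 n h = \<lfloor>sh3 n h\<rfloor>"

definition pi4 :: "nat \<Rightarrow> (nat \<Rightarrow> real) \<Rightarrow> int" where
  "pi4 n h = \<lfloor>sh4 n h\<rfloor>"

definition f3 :: "nat \<Rightarrow> (nat \<Rightarrow> real) \<Rightarrow> real" where
  "f3 n h = sh3 n h - of_int (pi3 n h)"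

definition f4 :: "nat \<Rightarrow> (nat \<Rightarrow> real) \<Rightarrow> real" where
  "f4 n h = sh4 n h - of_int (pi4 n h)"

definition z_a :: "nat \<Rightarrow> (nat \<Rightarrow> real) \<Rightarrow> real" where
  "z_a n h = real (pi1 n h) + real (card (S2 n h)) + of_int (pi3 n h) + of_int (pi4 n h)
             + of_int \<lceil>f3 n h + f4 n h\<rceil>"

definition z_b :: "nat \<Rightarrow> (nat \<Rightarrow> real) \<Rightarrow> ereal" where
  "z_b n h = (if S2 n h = {} then \<infinity> else
     (let hs = Max (h ` S2 n h);
          f2 = (if odd (card (S2 n h)) then 1/2 else 0 :: real)
      in ereal (2 * hs * (real (pi1 n h) + real (card (S2 n h) div 2) + of_int (pi3 n h)
                 + of_int (pi4 n h) + of_int \<lceil>f2 + f3 n h + f4 n h\<rceil>))))"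

definition H_PW :: "nat \<Rightarrow> (nat \<Rightarrow> real) \<Rightarrow> ereal" where
  "H_PW n h = min (ereal (z_a n h)) (z_b n h)"

end

theory Submission
  imports Defs
begin

text \<open>
  Because \<pi>1 + \<pi>3 + \<pi>4 = 2 and |S2| = 2, z(a) = 4 + \<lceil>f3 + f4\<rceil>.
  In a schedule of height H bamboo j is cut in every window of \<lfloor>H / h j\<rfloor> consecutive days,
  so \<Sum>j. 1 / \<lfloor>H / h j\<rfloor> \<le> 1, the density condition of pinwheel scheduling.
  As h'' \<le> 3/2 h, the bamboos other than 1 and those of S2 have total growth rate at least
  2/3 (\<pi>1 - 1 + sh3 + sh4) = 2/3 (1 + f3 + f4), whence H \<ge> \<Sum>j. h j \<ge> 8/3 + 2/3 (f3 + f4).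
  If H < 3, bamboo 1 would take half of the days and each bamboo of S2 a fifth, leaving less
  than 1/10 of the days for a remaining growth of at least 2/3; so H \<ge> 3.
  Hence z(a) / H is at most 5/3 if f3 + f4 \<le> 1 and at most 6 / (10/3) = 9/5 otherwise.
\<close>

lemma valid_instance_growth_range:
  assumes vi: "valid_instance n h" and j: "j \<in> {1..n}"
  shows "0 < h j \<and> h j \<le> 1"
proof -
  have antimono: "h k \<le> h i" if "1 \<le> i" "i \<le> k" "k \<le> n" for i k
    using that(2,1,3)
  proof (induction k rule: dec_induct)
    case (step k)
    then have "h (Suc k) \<le> h k" using vi unfolding valid_instance_def by auto
    with step show ?case by simp
  qed simp
  from antimono[of 1 j] antimono[of j n] vi j show ?thesis
    unfolding valid_instance_def by auto
qed

definition max_gap :: "real \<Rightarrow> real \<Rightarrow> nat" where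
  "max_gap H x = nat \<lfloor>H / x\<rfloor>"

lemma cut_within_max_gap:
  assumes bound: "\<And>t. t \<ge> 1 \<Longrightarrow> bamboo_height h \<sigma> j t \<le> H"
    and hj: "h j > 0" and s: "s \<ge> 1"
  shows "\<exists>u. s \<le> u \<and> u < s + max_gap H (h j) \<and> \<sigma> u = j"
proof -
  define t where "t = s + max_gap H (h j)"
  define cuts where "cuts = {u. 1 \<le> u \<and> u < t \<and> \<sigma> u = j}"
  have "finite cuts" unfolding cuts_def by (rule finite_subset[of _ "{..<t}"]) auto
  then have last_in: "last_cut \<sigma> j t \<in> {0} \<union> cuts"
    unfolding last_cut_def cuts_def[symmetric] by (intro Max_in) auto
  have "h j * real (t - last_cut \<sigma> j t) \<le> H"
    using bound[of t] s unfolding bamboo_height_def t_def by auto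
  then have "real (t - last_cut \<sigma> j t) \<le> H / h j"
    using hj by (simp add: pos_le_divide_eq mult.commute)
  then have "t - last_cut \<sigma> j t \<le> max_gap H (h j)"
    unfolding max_gap_def by (rule le_nat_floor)
  then have "s \<le> last_cut \<sigma> j t" unfolding t_def using s by linarith
  with last_in s show ?thesis unfolding cuts_def t_def by auto
qed

lemma card_cuts_ge_windows:
  assumes "\<And>s. s \<ge> 1 \<Longrightarrow> \<exists>u. s \<le> u \<and> u < s + g \<and> \<sigma> u = j"
  shows "m \<le> card {u\<in>{1..m * g}. \<sigma> u = j}"
proof (induction m)
  case (Suc m)
  obtain u where u: "m * g + 1 \<le> u" "u < m * g + 1 + g" "\<sigma> u = j"
    using assms[of "m * g + 1"] by auto
  have "insert u {u\<in>{1..m * g}. \<sigma> u = j} \<subseteq> {u\<in>{1..Suc m * g}. \<sigma> u = j}"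
    using u by auto
  then have "card (insert u {u\<in>{1..m * g}. \<sigma> u = j}) \<le> card {u\<in>{1..Suc m * g}. \<sigma> u = j}"
    by (intro card_mono) auto
  moreover have "u \<notin> {u\<in>{1..m * g}. \<sigma> u = j}" using u by auto
  ultimately show ?case using Suc.IH by simp
qed simp

text \<open>Over the common period T = \<Prod>j. g j, bamboo j takes at least T / g j of the T days.\<close>

lemma window_density_le_1:
  assumes "finite J"
    and windows: "\<And>j s. j \<in> J \<Longrightarrow> s \<ge> 1 \<Longrightarrow> \<exists>u. s \<le> u \<and> u < s + g j \<and> \<sigma> u = j"
  shows "(\<Sum>j\<in>J. 1 / real (g j)) \<le> 1"
proof -
  define T where "T = (\<Prod>j\<in>J. g j)"
  have g_pos: "g j > 0" if "j \<in> J" for j using windows[OF that, of 1] by auto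
  then have "T > 0" unfolding T_def by (simp add: prod_pos)
  have dvd_T: "g j dvd T" if "j \<in> J" for j
    unfolding T_def using that \<open>finite J\<close> by (intro dvd_prodI)
  have "T div g j \<le> card {u\<in>{1..T}. \<sigma> u = j}" if "j \<in> J" for j
    using card_cuts_ge_windows[OF windows[OF that], of "T div g j"] dvd_T[OF that] by simp
  then have "(\<Sum>j\<in>J. T div g j) \<le> (\<Sum>j\<in>J. card {u\<in>{1..T}. \<sigma> u = j})"
    by (rule sum_mono)
  also have "\<dots> = card (\<Union>j\<in>J. {u\<in>{1..T}. \<sigma> u = j})"
    using \<open>finite J\<close> by (intro card_UN_disjoint[symmetric]) auto
  also have "\<dots> \<le> card {1..T}" by (intro card_mono) auto
  finally have "(\<Sum>j\<in>J. T div g j) \<le> T" by simp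
  moreover have "real (\<Sum>j\<in>J. T div g j) = real T * (\<Sum>j\<in>J. 1 / real (g j))"
    by (simp add: sum_distrib_left real_of_nat_div dvd_T)
  ultimately have "real T * (\<Sum>j\<in>J. 1 / real (g j)) \<le> real T * 1"
    by (metis mult.right_neutral of_nat_le_iff)
  with \<open>T > 0\<close> show ?thesis by simp
qed

lemma max_gap_density:
  assumes vi: "valid_instance n h"
    and bound: "\<And>t j. t \<ge> 1 \<Longrightarrow> j \<in> {1..n} \<Longrightarrow> bamboo_height h \<sigma> j t \<le> H"
  shows "(\<Sum>j\<in>{1..n}. 1 / real (max_gap H (h j))) \<le> 1"
proof (rule window_density_le_1[where \<sigma> = \<sigma>])
  show "\<exists>u. s \<le> u \<and> u < s + max_gap H (h j) \<and> \<sigma> u = j" if "j \<in> {1..n}" "s \<ge> 1" for j s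
    using cut_within_max_gap[OF bound] valid_instance_growth_range[OF vi] that by blast
qed simp

lemma growth_le_height:
  assumes "\<And>t. t \<ge> 1 \<Longrightarrow> bamboo_height h \<sigma> j t \<le> H"
  shows "h j \<le> H"
proof -
  have no_cuts: "{s. 1 \<le> s \<and> s < (1::nat) \<and> \<sigma> s = j} = {}" by auto
  have "last_cut \<sigma> j 1 = 0" unfolding last_cut_def no_cuts by simp
  with assms[of 1] show ?thesis by (simp add: bamboo_height_def)
qed

lemma max_gap_ge_1_iff:
  assumes "x > 0" shows "max_gap H x \<ge> 1 \<longleftrightarrow> x \<le> H"
proof -
  have "max_gap H x \<ge> 1 \<longleftrightarrow> 1 \<le> \<lfloor>H / x\<rfloor>" unfolding max_gap_def by linarith
  also have "\<dots> \<longleftrightarrow> x \<le> H" using assms by (simp add: le_divide_eq_1_pos)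
  finally show ?thesis .
qed

lemma inverse_max_gap_ge_ratio:
  assumes "0 < x" "x \<le> H"
  shows "x / H \<le> 1 / real (max_gap H x)"
proof -
  have "1 \<le> real (max_gap H x)" using max_gap_ge_1_iff[of x H] assms by simp
  moreover have "real (max_gap H x) \<le> H / x"
    unfolding max_gap_def using assms by (simp add: of_nat_floor)
  ultimately show ?thesis using assms by (simp add: field_simps)
qed

lemma inverse_max_gap_ge:
  assumes "0 < x" "x \<le> H" "H < real (Suc m) * x"
  shows "1 / real m \<le> 1 / real (max_gap H x)"
proof -
  have "H / x < real (Suc m)" using assms by (simp add: divide_less_eq)
  then have "max_gap H x \<le> m" unfolding max_gap_def by (simp add: nat_le_iff floor_le_iff)
  moreover have "max_gap H x \<ge> 1" using max_gap_ge_1_iff assms by blast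
  ultimately show ?thesis by (simp add: frac_le)
qed

lemma growth_sum_le_height:
  assumes vi: "valid_instance n h"
    and bound: "\<And>t j. t \<ge> 1 \<Longrightarrow> j \<in> {1..n} \<Longrightarrow> bamboo_height h \<sigma> j t \<le> H"
  shows "(\<Sum>j\<in>{1..n}. h j) \<le> H"
proof -
  have range: "0 < h j \<and> h j \<le> H" if "j \<in> {1..n}" for j
    using valid_instance_growth_range[OF vi that] growth_le_height[OF bound[OF _ that]] by simp
  have H_pos: "H > 0" using range[of 1] vi unfolding valid_instance_def by auto
  have "(\<Sum>j\<in>{1..n}. h j / H) \<le> (\<Sum>j\<in>{1..n}. 1 / real (max_gap H (h j)))"
    using range by (intro sum_mono inverse_max_gap_ge_ratio) auto
  with max_gap_density[OF vi bound] have "(\<Sum>j\<in>{1..n}. h j) / H \<le> 1"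
    by (simp add: sum_divide_distrib[symmetric])
  with H_pos show ?thesis by (simp add: divide_le_eq)
qed

lemma dyadic_exponent_unique:
  fixes x :: real
  assumes "(1/2)^Suc k < x" "x \<le> (1/2)^k" "(1/2)^Suc k' < x" "x \<le> (1/2)^k'"
  shows "k = k'"
proof -
  have gap: "(1/2::real)^b \<le> (1/2)^Suc a" if "a < b" for a b :: nat
    using that by (intro power_decreasing) auto
  show ?thesis
  proof (rule linorder_cases[of k k'])
    assume "k < k'"
    with gap[of k k'] assms show ?thesis by linarith
  next
    assume "k' < k"
    with gap[of k' k] assms show ?thesis by linarith
  qed
qed

lemma h3''_eq:
  assumes "k \<ge> 1" "2/3 * (1/2)^k < h j" "h j \<le> (1/2)^k"
  shows "h3'' h j = (1/2)^k"
  unfolding h3''_def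
proof (rule the_equality)
  fix x assume "\<exists>k'. k' \<ge> 1 \<and> 2/3 * (1/2)^k' < h j \<and> h j \<le> (1/2)^k' \<and> x = (1/2::real)^k'"
  then obtain k' where k': "2/3 * (1/2)^k' < h j" "h j \<le> (1/2)^k'" "x = (1/2::real)^k'"
    by blast
  have "k' = k" using k' assms by (intro dyadic_exponent_unique[of _ "h j"]) auto
  with k' show "x = (1/2)^k" by simp
qed (use assms in auto)

lemma h4''_eq:
  assumes "k \<ge> 1" "(1/2)^(k+1) < h j" "h j \<le> 2/3 * (1/2)^k"
  shows "h4'' h j = 2/3 * (1/2)^k"
  unfolding h4''_def
proof (rule the_equality)
  fix x assume "\<exists>k'. k' \<ge> 1 \<and> (1/2)^(k'+1) < h j \<and> h j \<le> 2/3 * (1/2)^k' \<and> x = 2/3 * (1/2::real)^k'"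
  then obtain k' where k': "(1/2)^(k'+1) < h j" "h j \<le> 2/3 * (1/2)^k'" "x = 2/3 * (1/2::real)^k'"
    by blast
  have "k' = k" using k' assms by (intro dyadic_exponent_unique[of _ "h j"]) auto
  with k' show "x = 2/3 * (1/2)^k" by simp
qed (use assms in auto)

lemma h3''_le: "j \<in> S3 n h \<Longrightarrow> h3'' h j \<le> 3/2 * h j"
  unfolding S3_def by (auto simp: h3''_eq)

lemma h4''_le: "j \<in> S4 n h \<Longrightarrow> h4'' h j \<le> 3/2 * h j"
  unfolding S4_def by (auto simp: h4''_eq)

lemma S3_S4_disjoint: "S3 n h \<inter> S4 n h = {}"
proof -
  have False if "2/3 * (1/2)^k < x" "x \<le> (1/2)^k" "(1/2)^(k'+1) < x" "x \<le> 2/3 * (1/2::real)^k'"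
    for x k k'
  proof -
    have "k = k'" using that by (intro dyadic_exponent_unique[of _ x]) auto
    with that show False by simp
  qed
  then show ?thesis unfolding S3_def S4_def by blast
qed

definition rest_bamboos :: "nat \<Rightarrow> (nat \<Rightarrow> real) \<Rightarrow> nat set" where
  "rest_bamboos n h = {1..n} - insert 1 (S2 n h)"

lemma sum_split_rest_bamboos:
  assumes "valid_instance n h"
  shows "(\<Sum>j\<in>{1..n}. F j) = F 1 + (\<Sum>j\<in>S2 n h. F j) + (\<Sum>j\<in>rest_bamboos n h. F j)"
proof -
  have "1 \<in> {1..n}" "1 \<notin> S2 n h" "S2 n h \<subseteq> {1..n}"
    using assms unfolding valid_instance_def S2_def by auto
  then have "(\<Sum>j\<in>{1..n}. F j) = (\<Sum>j\<in>rest_bamboos n h. F j) + (\<Sum>j\<in>insert 1 (S2 n h). F j)"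
    unfolding rest_bamboos_def by (intro sum.subset_diff) auto
  with \<open>1 \<notin> S2 n h\<close> \<open>S2 n h \<subseteq> {1..n}\<close> show ?thesis
    by (simp add: finite_subset add.commute)
qed

lemma S1_S3_S4_disjoint: "S1 n h \<inter> (S3 n h \<union> S4 n h) = {}"
  unfolding S1_def S3_def S4_def by auto

lemma S1_S3_S4_subset_rest_bamboos:
  assumes "valid_instance n h"
  shows "(S1 n h - {1}) \<union> (S3 n h \<union> S4 n h) \<subseteq> rest_bamboos n h"
proof
  fix j assume j: "j \<in> (S1 n h - {1}) \<union> (S3 n h \<union> S4 n h)"
  have "h 1 = 1" using assms unfolding valid_instance_def by simp
  with j have "j \<in> {1..n}" "j \<noteq> 1" unfolding S1_def S3_def S4_def by auto
  moreover have "j \<notin> S2 n h" using j unfolding S1_def S2_def S3_def S4_def by auto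
  ultimately show "j \<in> rest_bamboos n h" by (simp add: rest_bamboos_def)
qed

lemma rest_growth_sum_ge:
  assumes vi: "valid_instance n h"
  shows "2/3 * (real (pi1 n h) - 1 + sh3 n h + sh4 n h) \<le> (\<Sum>j\<in>rest_bamboos n h. h j)"
proof -
  have fin: "finite (S1 n h)" "finite (S3 n h)" "finite (S4 n h)"
    unfolding S1_def S3_def S4_def by auto
  have one_S1: "1 \<in> S1 n h" using vi unfolding valid_instance_def S1_def by auto
  have "pi1 n h \<ge> 1" unfolding pi1_def using one_S1 fin(1) by (auto simp: Suc_le_eq card_gt_0_iff)
  then have "2/3 * (real (pi1 n h) - 1) = (\<Sum>j\<in>S1 n h - {1}. 2/3)"
    using one_S1 fin unfolding pi1_def by (simp add: of_nat_diff)
  also have "\<dots> \<le> (\<Sum>j\<in>S1 n h - {1}. h j)" by (intro sum_mono) (auto simp: S1_def)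
  finally have S1_mass: "2/3 * (real (pi1 n h) - 1) \<le> (\<Sum>j\<in>S1 n h - {1}. h j)" .
  have S3_mass: "2/3 * sh3 n h \<le> (\<Sum>j\<in>S3 n h. h j)"
    unfolding sh3_def sum_distrib_left using h3''_le by (intro sum_mono) fastforce
  have S4_mass: "2/3 * sh4 n h \<le> (\<Sum>j\<in>S4 n h. h j)"
    unfolding sh4_def sum_distrib_left using h4''_le by (intro sum_mono) fastforce
  have "(\<Sum>j\<in>S1 n h - {1}. h j) + (\<Sum>j\<in>S3 n h. h j) + (\<Sum>j\<in>S4 n h. h j)
      = (\<Sum>j\<in>(S1 n h - {1}) \<union> (S3 n h \<union> S4 n h). h j)"
    using fin S3_S4_disjoint[of n h] S1_S3_S4_disjoint[of n h]
    by (subst sum.union_disjoint) (auto simp: sum.union_disjoint)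
  also have "\<dots> \<le> (\<Sum>j\<in>rest_bamboos n h. h j)"
  proof (rule sum_mono2)
    show "(S1 n h - {1}) \<union> (S3 n h \<union> S4 n h) \<subseteq> rest_bamboos n h"
      by (rule S1_S3_S4_subset_rest_bamboos[OF vi])
    show "0 \<le> h j" if "j \<in> rest_bamboos n h - ((S1 n h - {1}) \<union> (S3 n h \<union> S4 n h))" for j
      using that valid_instance_growth_range[OF vi, of j] by (simp add: rest_bamboos_def)
  qed (simp add: rest_bamboos_def)
  finally show ?thesis using S1_mass S3_mass S4_mass by simp
qed

lemma height_ge_3:
  assumes vi: "valid_instance n h"
    and S2: "card (S2 n h) \<ge> 2"
    and rest: "1 \<le> real (pi1 n h) - 1 + sh3 n h + sh4 n h"
    and bound: "\<And>t j. t \<ge> 1 \<Longrightarrow> j \<in> {1..n} \<Longrightarrow> bamboo_height h \<sigma> j t \<le> H"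
  shows "H \<ge> 3"
proof (rule ccontr)
  assume "\<not> H \<ge> 3"
  then have H3: "H < 3" by simp
  define w where "w j = 1 / real (max_gap H (h j))" for j
  have range: "0 < h j \<and> h j \<le> H" if "j \<in> {1..n}" for j
    using valid_instance_growth_range[OF vi that] growth_le_height[OF bound[OF _ that]] by simp
  have "1 \<in> {1..n}" "h 1 = 1" using vi unfolding valid_instance_def by auto
  then have w1: "1/2 \<le> w 1"
    using inverse_max_gap_ge[of "h 1" H 2] range[of 1] H3 unfolding w_def by simp
  have "1/5 \<le> w j" if "j \<in> S2 n h" for j
  proof -
    have "j \<in> {1..n}" "h j > 1/2" using that unfolding S2_def by auto
    then show ?thesis
      using inverse_max_gap_ge[of "h j" H 5] range[of j] H3 unfolding w_def by simp
  qed
  then have "(\<Sum>j\<in>S2 n h. 1/5) \<le> (\<Sum>j\<in>S2 n h. w j)" by (rule sum_mono)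
  with S2 have w_S2: "2/5 \<le> (\<Sum>j\<in>S2 n h. w j)" by simp
  have "(\<Sum>j\<in>rest_bamboos n h. h j) / H \<le> (\<Sum>j\<in>rest_bamboos n h. w j)"
    unfolding sum_divide_distrib w_def
    using range by (intro sum_mono inverse_max_gap_ge_ratio) (auto simp: rest_bamboos_def)
  moreover have "2/3 \<le> (\<Sum>j\<in>rest_bamboos n h. h j)"
    using rest_growth_sum_ge[OF vi] mult_left_mono[OF rest, of "2/3"] by simp
  moreover have "H > 0" using range \<open>1 \<in> {1..n}\<close> by force
  then have "2/9 < (2/3) / H" using H3 by (simp add: field_simps)
  ultimately have "2/9 < (\<Sum>j\<in>rest_bamboos n h. w j)"
    using divide_right_mono[of "2/3" "\<Sum>j\<in>rest_bamboos n h. h j" H] \<open>H > 0\<close> by linarith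
  moreover have "(\<Sum>j\<in>{1..n}. w j) \<le> 1"
    unfolding w_def by (rule max_gap_density[OF vi bound])
  ultimately show False
    using w1 w_S2 sum_split_rest_bamboos[OF vi, of w] by linarith
qed

lemma z_a_le_height:
  assumes vi: "valid_instance n h"
    and S2: "card (S2 n h) = 2"
    and pi: "int (pi1 n h) + pi3 n h + pi4 n h - 1 = 1"
    and bound: "\<And>t j. t \<ge> 1 \<Longrightarrow> j \<in> {1..n} \<Longrightarrow> bamboo_height h \<sigma> j t \<le> H"
  shows "z_a n h \<le> 360/193 * H"
proof -
  define f where "f = f3 n h + f4 n h"
  have f_range: "0 \<le> f" "f < 2" unfolding f_def f3_def f4_def pi3_def pi4_def by linarith+
  have pi_real: "real (pi1 n h) + of_int (pi3 n h) + of_int (pi4 n h) = 2"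
  proof -
    have "real_of_int (int (pi1 n h) + pi3 n h + pi4 n h) = 2" using pi by simp
    then show ?thesis by simp
  qed
  then have z_a: "z_a n h = 4 + of_int \<lceil>f\<rceil>"
    unfolding z_a_def f_def using S2 by simp
  have rest: "real (pi1 n h) - 1 + sh3 n h + sh4 n h = 1 + f"
    using pi_real unfolding f_def f3_def f4_def by simp
  have "H \<ge> 3" using height_ge_3[OF vi _ _ bound] S2 rest f_range by simp
  have "(\<Sum>j\<in>S2 n h. 1/2) \<le> (\<Sum>j\<in>S2 n h. h j)" by (intro sum_mono) (auto simp: S2_def)
  then have "1 \<le> (\<Sum>j\<in>S2 n h. h j)" using S2 by simp
  moreover have "h 1 = 1" using vi unfolding valid_instance_def by simp
  moreover have "2/3 + 2/3 * f \<le> (\<Sum>j\<in>rest_bamboos n h. h j)"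
    using rest_growth_sum_ge[OF vi] unfolding rest by (simp add: distrib_left)
  ultimately have mass: "8/3 + 2/3 * f \<le> H"
    using growth_sum_le_height[OF vi bound] sum_split_rest_bamboos[OF vi, of h] by linarith
  show ?thesis
  proof (cases "f \<le> 1")
    case True
    then have "\<lceil>f\<rceil> \<le> 1" by linarith
    then have "z_a n h \<le> 5" using z_a by simp
    with \<open>H \<ge> 3\<close> show ?thesis by linarith
  next
    case False
    have "\<lceil>f\<rceil> \<le> 2" using f_range by linarith
    then have "z_a n h \<le> 6" using z_a by simp
    with mass False show ?thesis by linarith
  qed
qed

lemma bamboo_height_le_schedule_height:
  assumes "t \<ge> 1" "j \<in> {1..n}"
  shows "ereal (bamboo_height h \<sigma> j t) \<le> schedule_height n h \<sigma>"
  unfolding schedule_height_def by (rule SUP_upper2[of t]) (use assms in \<open>auto intro: SUP_upper\<close>)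

lemma ereal_le_H_star:
  assumes "n \<ge> 1"
    and "\<And>\<sigma> H. (\<And>t j. t \<ge> 1 \<Longrightarrow> j \<in> {1..n} \<Longrightarrow> bamboo_height h \<sigma> j t \<le> H) \<Longrightarrow> c \<le> H"
  shows "ereal c \<le> H_star n h"
  unfolding H_star_def
proof (rule INF_greatest)
  fix \<sigma>
  show "ereal c \<le> schedule_height n h \<sigma>"
  proof (cases "schedule_height n h \<sigma>")
    case (real H)
    with bamboo_height_le_schedule_height[of _ _ n h \<sigma>] have "c \<le> H" by (intro assms(2)) auto
    with real show ?thesis by simp
  next
    case MInf
    with bamboo_height_le_schedule_height[of 1 1 n h \<sigma>] \<open>n \<ge> 1\<close> show ?thesis by simp
  qed simp
qed

theorem proposition5:
  fixes n :: nat and h :: "nat \<Rightarrow> real"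
  assumes "valid_instance n h"
    and "card (S2 n h) = 2"
    and "int (pi1 n h) + pi3 n h + pi4 n h - 1 = 1"
  shows "H_PW n h \<le> ereal (360/193) * H_star n h"
proof -
  have "n \<ge> 1" using assms(1) unfolding valid_instance_def by simp
  have "ereal (193/360 * z_a n h) \<le> H_star n h"
  proof (rule ereal_le_H_star[OF \<open>n \<ge> 1\<close>])
    fix \<sigma> H
    assume "\<And>t j. t \<ge> 1 \<Longrightarrow> j \<in> {1..n} \<Longrightarrow> bamboo_height h \<sigma> j t \<le> H"
    from z_a_le_height[OF assms this] show "193/360 * z_a n h \<le> H" by simp
  qed
  then have "ereal (360/193) * ereal (193/360 * z_a n h) \<le> ereal (360/193) * H_star n h"
    by (rule ereal_mult_left_mono) simp
  then show ?thesis unfolding H_PW_def by (simp add: min.coboundedI1)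
qed

end
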